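(* For every integer $n\ge 4$, \[ R_n(x)=\begin{cases} xR_{n-1}(x)+R_{n-2}(x), & \text{if } n \text{ is odd},\\ R_{n-1}(x)+x^2R_{n-2}(x), & \text{if } n \text{ is even}.\end{cases} \]
   Context: For $n\ge1$ let $\Xi_n$ (the $L$-fence) be the poset on $\{x_1,\dots,x_n\}$ whose cover relations are exactly: $x_2\prec x_1$, $x_3\prec x_2$, and for $3\le i\le n-1$, $x_i\prec x_{i+1}$ if $i$ is odd and $x_{i+1}\prec x_i$ if $i$ is even (so $x_1>x_2>x_3<x_4>x_5<\cdots$). A filter of a poset $P$ is a subset $F$ with $x\in F$, $x\le y\Rightarrow y\in F$. $\Omega_n$ is the lattice of filters of $\Xi_n$ ordered by reverse inclusion; $\Omega_0$ is the one-element lattice. The rank generating function of $\Omega_n$ is $R_n(x)=\sum_{F\in\Omega_n}x^{\,n-|F|}$, with $R_0(x)=1$. *)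

theory Defs
  imports "HOL-Computational_Algebra.Polynomial"
begin

text \<open>The L-fence on {x_1,...,x_n}, element x_i represented by the natural number i.
  fence_cover n a b means x_a is covered by x_b (x_a \<prec> x_b).\<close>
definition fence_cover :: "nat \<Rightarrow> nat \<Rightarrow> nat \<Rightarrow> bool" where
  "fence_cover n a b \<longleftrightarrow> a \<in> {1..n} \<and> b \<in> {1..n} \<and>
     ((a = 2 \<and> b = 1) \<or> (a = 3 \<and> b = 2) \<or>
      (\<exists>i. 3 \<le> i \<and> i \<le> n - 1 \<and>
          ((odd i \<and> a = i \<and> b = i + 1) \<or> (even i \<and> a = i + 1 \<and> b = i))))"

definition fence_le :: "nat \<Rightarrow> nat \<Rightarrow> nat \<Rightarrow> bool" where
  "fence_le n = (fence_cover n)\<^sup>*\<^sup>*"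

definition fence_filters :: "nat \<Rightarrow> nat set set" where
  "fence_filters n = {F. F \<subseteq> {1..n} \<and>
     (\<forall>x y. x \<in> F \<longrightarrow> y \<in> {1..n} \<longrightarrow> fence_le n x y \<longrightarrow> y \<in> F)}"

definition rank_gen :: "nat \<Rightarrow> int poly" where
  "rank_gen n = (\<Sum>F\<in>fence_filters n. monom 1 (n - card F))"

end

theory Submission
  imports Defs
begin

text \<open>Split the filters of \<open>\<Xi>\<^sub>n\<close> according to whether they contain \<open>x\<^sub>n\<close>.
  For odd \<open>n\<close>, \<open>x\<^sub>n\<close> is minimal and covered only by \<open>x\<^bsub>n-1\<^esub>\<close>, which is maximal:
  a filter avoiding \<open>x\<^sub>n\<close> is a filter of \<open>\<Xi>\<^bsub>n-1\<^esub>\<close> (one more missing element, hence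
  the factor \<open>x\<close>), and a filter containing \<open>x\<^sub>n\<close> also contains \<open>x\<^bsub>n-1\<^esub>\<close>, so it is a
  filter of \<open>\<Xi>\<^bsub>n-2\<^esub>\<close> plus these two elements. For even \<open>n\<close> the picture is dual:
  \<open>x\<^sub>n\<close> is maximal and covers only the minimal element \<open>x\<^bsub>n-1\<^esub>\<close>, so a filter is either a
  filter of \<open>\<Xi>\<^bsub>n-1\<^esub>\<close> plus \<open>x\<^sub>n\<close>, or avoids both and is a filter of \<open>\<Xi>\<^bsub>n-2\<^esub>\<close>
  (factor \<open>x\<^sup>2\<close>).\<close>

definition fence_covers :: "nat \<Rightarrow> nat \<Rightarrow> bool" where
  "fence_covers a b \<longleftrightarrow> (a = 2 \<and> b = 1) \<or> (a = 3 \<and> b = 2) \<or>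
     (3 \<le> a \<and> odd a \<and> b = a + 1) \<or> (3 \<le> b \<and> even b \<and> a = b + 1)"

lemma fence_cover_iff: "fence_cover n a b \<longleftrightarrow> a \<in> {1..n} \<and> b \<in> {1..n} \<and> fence_covers a b"
  unfolding fence_cover_def fence_covers_def
  by (rule iffI; elim conjE disjE exE) auto

lemma rtranclp_preserves_closed:
  assumes "r\<^sup>*\<^sup>* x y" "x \<in> F" "\<And>a b. a \<in> F \<Longrightarrow> r a b \<Longrightarrow> b \<in> F"
  shows "y \<in> F"
  using assms by (induction rule: rtranclp_induct) auto

lemma mem_fence_filters_iff:
  "F \<in> fence_filters n \<longleftrightarrow> F \<subseteq> {1..n} \<and> (\<forall>a\<in>F. \<forall>b\<in>{1..n}. fence_covers a b \<longrightarrow> b \<in> F)"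
proof
  assume "F \<in> fence_filters n"
  then show "F \<subseteq> {1..n} \<and> (\<forall>a\<in>F. \<forall>b\<in>{1..n}. fence_covers a b \<longrightarrow> b \<in> F)"
    unfolding fence_filters_def fence_le_def by (fastforce simp: fence_cover_iff)
next
  assume F: "F \<subseteq> {1..n} \<and> (\<forall>a\<in>F. \<forall>b\<in>{1..n}. fence_covers a b \<longrightarrow> b \<in> F)"
  then have "y \<in> F" if "x \<in> F" "fence_le n x y" for x y
    using that unfolding fence_le_def by (auto simp: fence_cover_iff intro: rtranclp_preserves_closed)
  with F show "F \<in> fence_filters n"
    unfolding fence_filters_def by blast
qed

lemma fence_filters_subset: "F \<in> fence_filters n \<Longrightarrow> F \<subseteq> {1..n}"
  by (simp add: mem_fence_filters_iff)

lemma finite_fence_filters: "finite (fence_filters n)"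
  by (rule finite_subset[of _ "Pow {1..n}"]) (use fence_filters_subset in auto)

lemma finite_fence_filter: "F \<in> fence_filters n \<Longrightarrow> finite F"
  by (meson fence_filters_subset finite_atLeastAtMost finite_subset)

lemma card_fence_filter_le: "F \<in> fence_filters n \<Longrightarrow> card F \<le> n"
  using card_mono[of "{1..n}" F] by (auto dest: fence_filters_subset)

lemma fence_filter_upward:
  "F \<in> fence_filters n \<Longrightarrow> a \<in> F \<Longrightarrow> fence_covers a b \<Longrightarrow> b \<in> {1..n} \<Longrightarrow> b \<in> F"
  by (simp add: mem_fence_filters_iff)

lemma fence_filter_Diff_greaterThanAtMost:
  assumes "F \<in> fence_filters n" "m \<le> n"
  shows "F - {m<..n} \<in> fence_filters m"
  using assms by (auto simp: mem_fence_filters_iff)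

lemma fence_filter_extend:
  assumes "G \<in> fence_filters m" "m \<le> n"
    and "\<And>a b. a \<in> G \<Longrightarrow> m < b \<Longrightarrow> b \<le> n \<Longrightarrow> \<not> fence_covers a b"
  shows "G \<in> fence_filters n"
  unfolding mem_fence_filters_iff
proof (intro conjI ballI impI)
  show "G \<subseteq> {1..n}"
    using fence_filters_subset[OF assms(1)] assms(2) by auto
next
  fix a b assume "a \<in> G" "b \<in> {1..n}" "fence_covers a b"
  with assms show "b \<in> G"
    by (cases "b \<le> m") (auto intro: fence_filter_upward)
qed

lemma fence_filter_Un_greaterThanAtMost:
  assumes "G \<in> fence_filters m" "m \<le> n"
    and "\<And>a b. m < a \<Longrightarrow> a \<le> n \<Longrightarrow> b \<le> m \<Longrightarrow> \<not> fence_covers a b"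
  shows "G \<union> {m<..n} \<in> fence_filters n"
  unfolding mem_fence_filters_iff
proof (intro conjI ballI impI)
  show "G \<union> {m<..n} \<subseteq> {1..n}"
    using fence_filters_subset[OF assms(1)] assms(2) by auto
next
  fix a b assume a: "a \<in> G \<union> {m<..n}" and b: "b \<in> {1..n}" and ab: "fence_covers a b"
  show "b \<in> G \<union> {m<..n}"
  proof (cases "b \<le> m")
    case True
    with a ab assms(3) have "a \<in> G"
      by force
    with True ab b show ?thesis
      using fence_filter_upward[OF assms(1)] by simp
  qed (use b in auto)
qed

lemma greaterThanAtMost_diff_one: "0 < n \<Longrightarrow> {n - 1<..n} = {n::nat}"
  by auto

lemma greaterThanAtMost_diff_two: "1 < n \<Longrightarrow> {n - 2<..n} = {n - 1, n::nat}"
  by auto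

lemma fence_covers_odd_top:
  assumes "odd n" "5 \<le> n"
  shows "\<not> fence_covers a n" "\<not> fence_covers (n - 1) b" "fence_covers n (n - 1)"
    and "b \<le> n \<Longrightarrow> fence_covers n b \<Longrightarrow> b = n - 1"
  using assms unfolding fence_covers_def by presburger+

lemma fence_covers_even_top:
  assumes "even n" "4 \<le> n"
  shows "\<not> fence_covers n b" "\<not> fence_covers a (n - 1)" "fence_covers (n - 1) n"
    and "a \<le> n \<Longrightarrow> fence_covers a n \<Longrightarrow> a = n - 1"
  using assms unfolding fence_covers_def by presburger+

lemma fence_filters_odd:
  assumes "odd n" "5 \<le> n"
  shows "fence_filters n =
    fence_filters (n - 1) \<union> (\<lambda>G. G \<union> {n - 2<..n}) ` fence_filters (n - 2)"
proof (intro set_eqI iffI)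
  note top = fence_covers_odd_top[OF assms]
  fix F assume F: "F \<in> fence_filters n"
  show "F \<in> fence_filters (n - 1) \<union> (\<lambda>G. G \<union> {n - 2<..n}) ` fence_filters (n - 2)"
  proof (cases "n \<in> F")
    case False
    with assms(2) have "F = F - {n - 1<..n}"
      by (subst greaterThanAtMost_diff_one) auto
    with fence_filter_Diff_greaterThanAtMost[OF F] have "F \<in> fence_filters (n - 1)"
      by (metis diff_le_self)
    then show ?thesis ..
  next
    case True
    with F top(3) assms(2) have "n - 1 \<in> F"
      by (simp add: fence_filter_upward)
    with True assms(2) have "F = (F - {n - 2<..n}) \<union> {n - 2<..n}"
      by (auto simp: greaterThanAtMost_diff_two)
    moreover have "F - {n - 2<..n} \<in> fence_filters (n - 2)"
      using fence_filter_Diff_greaterThanAtMost[OF F] by simp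
    ultimately show ?thesis by blast
  qed
next
  note top = fence_covers_odd_top[OF assms]
  fix F assume "F \<in> fence_filters (n - 1) \<union> (\<lambda>G. G \<union> {n - 2<..n}) ` fence_filters (n - 2)"
  then show "F \<in> fence_filters n"
  proof
    assume "F \<in> fence_filters (n - 1)"
    then show ?thesis
    proof (rule fence_filter_extend)
      fix a b assume "n - 1 < b" "b \<le> n"
      then have "b = n" by arith
      with top(1) show "\<not> fence_covers a b" by simp
    qed simp
  next
    assume "F \<in> (\<lambda>G. G \<union> {n - 2<..n}) ` fence_filters (n - 2)"
    then obtain G where G: "G \<in> fence_filters (n - 2)" and F: "F = G \<union> {n - 2<..n}" ..
    show ?thesis
      unfolding F
    proof (rule fence_filter_Un_greaterThanAtMost[OF G])
      fix a b assume "n - 2 < a" "a \<le> n" "b \<le> n - 2"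
      with assms(2) have "a = n - 1 \<or> (a = n \<and> b \<noteq> n - 1)"
        by arith
      with top(2,4) \<open>b \<le> n - 2\<close> show "\<not> fence_covers a b"
        by auto
    qed simp
  qed
qed

lemma fence_filters_even:
  assumes "even n" "4 \<le> n"
  shows "fence_filters n =
    fence_filters (n - 2) \<union> (\<lambda>G. G \<union> {n - 1<..n}) ` fence_filters (n - 1)"
proof (intro set_eqI iffI)
  note top = fence_covers_even_top[OF assms]
  fix F assume F: "F \<in> fence_filters n"
  show "F \<in> fence_filters (n - 2) \<union> (\<lambda>G. G \<union> {n - 1<..n}) ` fence_filters (n - 1)"
  proof (cases "n \<in> F")
    case False
    moreover have "n \<in> F" if "n - 1 \<in> F"
      using fence_filter_upward[OF F that top(3)] assms(2) by simp
    ultimately have "F = F - {n - 2<..n}"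
      using assms(2) by (auto simp: greaterThanAtMost_diff_two)
    with fence_filter_Diff_greaterThanAtMost[OF F] have "F \<in> fence_filters (n - 2)"
      by (metis diff_le_self)
    then show ?thesis ..
  next
    case True
    with assms(2) have "F = (F - {n - 1<..n}) \<union> {n - 1<..n}"
      by (subst greaterThanAtMost_diff_one) auto
    moreover have "F - {n - 1<..n} \<in> fence_filters (n - 1)"
      using fence_filter_Diff_greaterThanAtMost[OF F] by simp
    ultimately show ?thesis by blast
  qed
next
  note top = fence_covers_even_top[OF assms]
  fix F assume "F \<in> fence_filters (n - 2) \<union> (\<lambda>G. G \<union> {n - 1<..n}) ` fence_filters (n - 1)"
  then show "F \<in> fence_filters n"
  proof
    assume F: "F \<in> fence_filters (n - 2)"
    then show ?thesis
    proof (rule fence_filter_extend)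
      fix a b assume "a \<in> F" "n - 2 < b" "b \<le> n"
      moreover have "a \<le> n - 2"
        using fence_filters_subset[OF F] \<open>a \<in> F\<close> by auto
      ultimately have "a \<le> n" "b = n - 1 \<or> (b = n \<and> a \<noteq> n - 1)"
        using assms(2) by arith+
      with top(2,4) show "\<not> fence_covers a b"
        by blast
    qed simp
  next
    assume "F \<in> (\<lambda>G. G \<union> {n - 1<..n}) ` fence_filters (n - 1)"
    then obtain G where G: "G \<in> fence_filters (n - 1)" and F: "F = G \<union> {n - 1<..n}" ..
    show ?thesis
      unfolding F
    proof (rule fence_filter_Un_greaterThanAtMost[OF G])
      fix a b assume "n - 1 < a" "a \<le> n"
      then have "a = n" by arith
      with top(1) show "\<not> fence_covers a b" by simp
    qed simp
  qed
qed

lemma sum_monom_card_fence_filters: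
  assumes "m \<le> n"
  shows "(\<Sum>F\<in>fence_filters m. monom 1 (n - card F)) = [:0, 1:] ^ (n - m) * rank_gen m"
  unfolding rank_gen_def sum_distrib_left
proof (rule sum.cong[OF refl])
  fix F assume "F \<in> fence_filters m"
  with assms have "n - card F = (n - m) + (m - card F)"
    using card_fence_filter_le by fastforce
  then show "monom 1 (n - card F) = [:0, 1:] ^ (n - m) * monom 1 (m - card F)"
    by (simp add: monom_altdef power_add)
qed

lemma sum_monom_card_fence_filters_Un:
  assumes "m \<le> n"
  shows "(\<Sum>F\<in>(\<lambda>G. G \<union> {m<..n}) ` fence_filters m. monom 1 (n - card F)) = rank_gen m"
proof -
  have disjoint: "G \<inter> {m<..n} = {}" if "G \<in> fence_filters m" for G
    using fence_filters_subset[OF that] by auto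
  have "inj_on (\<lambda>G. G \<union> {m<..n}) (fence_filters m)"
    by (rule inj_onI) (use disjoint in blast)
  moreover have "n - card (G \<union> {m<..n}) = m - card G" if "G \<in> fence_filters m" for G
    using assms card_fence_filter_le[OF that] finite_fence_filter[OF that] disjoint[OF that]
    by (simp add: card_Un_disjoint)
  ultimately show ?thesis
    unfolding rank_gen_def by (simp add: sum.reindex)
qed

lemma rank_gen_decompose:
  assumes "fence_filters n = fence_filters k \<union> (\<lambda>G. G \<union> {m<..n}) ` fence_filters m"
    and "k < n" "m < n"
  shows "rank_gen n = [:0, 1:] ^ (n - k) * rank_gen k + rank_gen m"
proof -
  have "n \<notin> F" if "F \<in> fence_filters k" for F
    using fence_filters_subset[OF that] \<open>k < n\<close> by auto
  moreover have "n \<in> G \<union> {m<..n}" for G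
    using \<open>m < n\<close> by simp
  ultimately have "fence_filters k \<inter> (\<lambda>G. G \<union> {m<..n}) ` fence_filters m = {}"
    by blast
  then show ?thesis
    unfolding rank_gen_def assms(1)
    using assms(2,3) finite_fence_filters
    by (simp add: sum.union_disjoint sum_monom_card_fence_filters
        sum_monom_card_fence_filters_Un[unfolded rank_gen_def])
qed

theorem mainTheorem2:
  fixes n :: nat
  assumes "n \<ge> 4"
  shows "rank_gen n =
    (if odd n then [:0, 1:] * rank_gen (n - 1) + rank_gen (n - 2)
     else rank_gen (n - 1) + [:0, 1:] ^ 2 * rank_gen (n - 2))"
proof (cases "even n")
  case True
  with assms show ?thesis
    using rank_gen_decompose[OF fence_filters_even[OF True assms]] by (simp add: add.commute)
next
  case False
  with assms have "5 \<le> n"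
    by presburger
  with False show ?thesis
    using rank_gen_decompose[OF fence_filters_odd[OF False \<open>5 \<le> n\<close>]] by simp
qed

end
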